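(* Let $H\in(1/2,1)$ and let $B^H$ be a fractional Brownian motion on $[0,1]$ with Hurst index $H$. Fix $\alpha\in(1/2,H)$, $\delta\in(0,H-\alpha)$ and $\rho>0$, and define $$N=\sup\Bigl\{n\ge1:\ \|B^H_n-B^H_{n-1}\|_\infty\ge \rho\cdot 2^{-(H-\delta)n}\Bigr\}.$$ Then for every $n>N$, $$\|B^H-B^H_n\|_\alpha\le \frac{\rho\, 2^{2-\alpha}\cdot 2^{-(H-\alpha-\delta)(n+1)}}{1-2^{-(H-\alpha-\delta)}}.$$
   Context: A fractional Brownian motion with Hurst index $H$ is a centered Gaussian process with $B^H(0)=0$ and covariance $\mathbb{E}[B^H(s)B^H(t)]=\tfrac12(|s|^{2H}+|t|^{2H}-|s-t|^{2H})$, taken with continuous sample paths. For $n\ge0$, $B^H_n$ is the function on $[0,1]$ obtained by linear interpolation of the values of $B^H$ at the dyadic points $i/2^n$, $i=0,\dots,2^n$; $B^H_{-1}\equiv0$. $\|u\|_\infty=\sup_{t\in[0,1]}|u(t)|$ and $\|u\|_\alpha=\sup_{0\le s<t\le1}|u(s)-u(t)|/|s-t|^\alpha$. *)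

theory Defs
  imports "HOL-Probability.Probability" "HOL-Library.Extended_Nat"
begin

definition fbm_cov :: "real \<Rightarrow> real \<Rightarrow> real \<Rightarrow> real" where
  "fbm_cov H s t = (\<bar>s\<bar> powr (2*H) + \<bar>t\<bar> powr (2*H) - \<bar>s - t\<bar> powr (2*H)) / 2"

definition centered_gaussian_rv :: "'a measure \<Rightarrow> ('a \<Rightarrow> real) \<Rightarrow> real \<Rightarrow> bool" where
  "centered_gaussian_rv M X v \<longleftrightarrow>
     X \<in> borel_measurable M \<and>
     (if v = 0 then (AE \<omega> in M. X \<omega> = 0)
      else 0 < v \<and> distributed M lborel X (\<lambda>x. ennreal (normal_density 0 (sqrt v) x)))"

text \<open>B is a fractional Brownian motion on [0,1] with Hurst index H on the probability
  space M: a centered Gaussian process (all finite linear combinations are centered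
  Gaussian with the variance given by the covariance), B(0) = 0, continuous paths.\<close>
definition is_fbm :: "'a measure \<Rightarrow> real \<Rightarrow> ('a \<Rightarrow> real \<Rightarrow> real) \<Rightarrow> bool" where
  "is_fbm M H B \<longleftrightarrow>
     prob_space M \<and>
     (\<forall>\<omega>\<in>space M. B \<omega> 0 = 0 \<and> continuous_on {0..1} (B \<omega>)) \<and>
     (\<forall>T (c :: real \<Rightarrow> real). finite T \<longrightarrow> T \<subseteq> {0..1} \<longrightarrow>
        centered_gaussian_rv M (\<lambda>\<omega>. \<Sum>t\<in>T. c t * B \<omega> t)
          (\<Sum>s\<in>T. \<Sum>t\<in>T. c s * c t * fbm_cov H s t))"

text \<open>Linear interpolation of f at the dyadic points i/2^n, i = 0..2^n (on [0,1]).\<close>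
definition dyadic_interp :: "(real \<Rightarrow> real) \<Rightarrow> nat \<Rightarrow> real \<Rightarrow> real" where
  "dyadic_interp f n t =
     (let m = (2::nat) ^ n; k = min (nat \<lfloor>t * real m\<rfloor>) (m - 1)
      in f (real k / real m) + (t * real m - real k) * (f (real (k+1) / real m) - f (real k / real m)))"

text \<open>Sup norm on [0,1] and alpha-Hoelder seminorm on [0,1], valued in the extended reals
  (so that an infinite value is represented faithfully).\<close>
definition sup_norm01 :: "(real \<Rightarrow> real) \<Rightarrow> ereal" where
  "sup_norm01 u = (SUP t\<in>{0..1}. ereal \<bar>u t\<bar>)"

definition holder_norm01 :: "real \<Rightarrow> (real \<Rightarrow> real) \<Rightarrow> ereal" where
  "holder_norm01 \<alpha> u = (SUP p\<in>{(s,t). 0 \<le> s \<and> s < t \<and> t \<le> 1}.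
       ereal (\<bar>u (fst p) - u (snd p)\<bar> / (snd p - fst p) powr \<alpha>))"

end

theory Submission
  imports Defs
begin

(* The difference D_i = B_(i+1) - B_i of consecutive dyadic interpolations is affine on every
   dyadic cell of level i+1, so a sup bound |D_i| <= r_i gives the Lipschitz bound
   2 r_i 2^(i+1) on steps shorter than 2^-(i+1), and hence the Hoelder bound
   |D_i(s) - D_i(t)| <= 2 r_i 2^((i+1) alpha) |t - s|^alpha.  For n > N the bound
   r_i = rho 2^-((H - delta)(i+1)) holds for all i >= n, so these Hoelder bounds form a geometric
   series of ratio 2^-(H - alpha - delta); as B_i -> B pointwise by continuity of the path, its
   tail bounds B - B_n. *)

definition dyadic_cell :: "nat \<Rightarrow> nat \<Rightarrow> real set" where
  "dyadic_cell m j = {real j / 2^m .. real (j + 1) / 2^m}"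

lemma dyadic_cell_subset:
  assumes "j < 2^m"
  shows "dyadic_cell m j \<subseteq> {0..1}"
proof -
  have "real (j + 1) \<le> 2^m"
    using assms by (metis Suc_eq_plus1 Suc_leI of_nat_le_iff of_nat_numeral of_nat_power)
  then show ?thesis by (auto simp: dyadic_cell_def field_simps)
qed

lemma dyadic_cell_exists:
  assumes "t \<in> {0..1}"
  shows "\<exists>j<(2::nat)^m. t \<in> dyadic_cell m j"
proof (cases "t = 1")
  case True
  obtain i where i: "(2::nat)^m = Suc i" by (metis gr0_implies_Suc zero_less_power zero_less_numeral)
  then have "real (Suc i) = 2^m" by (metis of_nat_numeral of_nat_power)
  then show ?thesis using True i by (intro exI[of _ i]) (auto simp: dyadic_cell_def field_simps)
next
  case False
  define j where "j = nat \<lfloor>t * 2^m\<rfloor>"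
  have t: "0 \<le> t * 2^m" "t * 2^m < 2^m" using assms False by auto
  have "real j \<le> t * 2^m" "t * 2^m < real j + 1" unfolding j_def using t by linarith+
  moreover from this have "j < 2^m" using t by (metis of_nat_less_iff of_nat_numeral of_nat_power le_less_trans)
  ultimately show ?thesis by (intro exI[of _ j]) (auto simp: dyadic_cell_def field_simps)
qed

lemma dyadic_interp_on_cell:
  assumes "j < 2^m" "t \<in> dyadic_cell m j"
  shows "dyadic_interp f m t =
    f (real j / 2^m) + (t * 2^m - real j) * (f (real (j + 1) / 2^m) - f (real j / 2^m))"
proof -
  have lo: "real j \<le> t * 2^m" and hi: "t * 2^m \<le> real j + 1"
    using assms(2) by (auto simp: dyadic_cell_def field_simps)
  have "min (nat \<lfloor>t * real ((2::nat)^m)\<rfloor>) (2^m - 1) = j \<or>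
        (min (nat \<lfloor>t * real ((2::nat)^m)\<rfloor>) (2^m - 1) = j + 1 \<and> t * 2^m = real j + 1)"
  proof (cases "t * 2^m < real j + 1")
    case True
    then have "\<lfloor>t * 2^m\<rfloor> = int j" using lo by (simp add: floor_eq_iff)
    then show ?thesis using assms(1) by simp
  next
    case False
    then have "t * 2^m = real j + 1" using hi by simp
    then show ?thesis using assms(1) by (simp add: nat_add_distrib min_def) linarith
  qed
  then show ?thesis
    unfolding dyadic_interp_def Let_def by (auto simp: add_divide_distrib add.commute)
qed

definition dyadic_piecewise_affine :: "nat \<Rightarrow> (real \<Rightarrow> real) \<Rightarrow> bool" where
  "dyadic_piecewise_affine m g \<longleftrightarrow>
     (\<forall>j<2^m. \<exists>c d. \<forall>t\<in>dyadic_cell m j. g t = c + d * t)"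

lemma dyadic_piecewise_affine_interp: "dyadic_piecewise_affine m (dyadic_interp f m)"
  unfolding dyadic_piecewise_affine_def
proof (intro allI impI)
  fix j :: nat assume j: "j < 2^m"
  let ?a = "f (real j / 2^m)" and ?b = "f (real (j + 1) / 2^m)"
  show "\<exists>c d. \<forall>t\<in>dyadic_cell m j. dyadic_interp f m t = c + d * t"
    using dyadic_interp_on_cell[OF j]
    by (intro exI[of _ "?a - real j * (?b - ?a)"] exI[of _ "2^m * (?b - ?a)"])
       (auto simp: algebra_simps)
qed

lemma dyadic_cell_Suc_subset: "dyadic_cell (Suc m) j \<subseteq> dyadic_cell m (j div 2)"
proof -
  have "real (2 * (j div 2)) / 2 ^ Suc m \<le> real j / 2 ^ Suc m"
    by (intro divide_right_mono) auto
  moreover have "real (j + 1) / 2 ^ Suc m \<le> real (2 * (j div 2 + 1)) / 2 ^ Suc m"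
    by (intro divide_right_mono) (simp only: of_nat_le_iff, presburger, simp)
  moreover have "real (2 * (j div 2)) / 2 ^ Suc m = real (j div 2) / 2^m"
    "real (2 * (j div 2 + 1)) / 2 ^ Suc m = real (j div 2 + 1) / 2^m"
    by (simp_all only: of_nat_mult power_Suc mult_divide_mult_cancel_left_if)
  ultimately show ?thesis by (auto simp: dyadic_cell_def)
qed

lemma dyadic_piecewise_affine_Suc:
  "dyadic_piecewise_affine m g \<Longrightarrow> dyadic_piecewise_affine (Suc m) g"
  unfolding dyadic_piecewise_affine_def using dyadic_cell_Suc_subset
  by (metis less_mult_imp_div_less mult.commute power_Suc subsetD)

lemma dyadic_piecewise_affine_diff:
  assumes "dyadic_piecewise_affine m g" "dyadic_piecewise_affine m h"
  shows "dyadic_piecewise_affine m (\<lambda>t. g t - h t)"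
  unfolding dyadic_piecewise_affine_def
proof (intro allI impI)
  fix j :: nat assume "j < 2^m"
  then obtain c d c' d' where "\<forall>t\<in>dyadic_cell m j. g t = c + d * t" "\<forall>t\<in>dyadic_cell m j. h t = c' + d' * t"
    using assms unfolding dyadic_piecewise_affine_def by meson
  then show "\<exists>c d. \<forall>t\<in>dyadic_cell m j. g t - h t = c + d * t"
    by (intro exI[of _ "c - c'"] exI[of _ "d - d'"]) (auto simp: algebra_simps)
qed

lemma dyadic_interp_Suc_diff_piecewise_affine:
  "dyadic_piecewise_affine (Suc m) (\<lambda>t. dyadic_interp f (Suc m) t - dyadic_interp f m t)"
  by (intro dyadic_piecewise_affine_diff dyadic_piecewise_affine_interp
      dyadic_piecewise_affine_Suc)

lemma dyadic_piecewise_affine_lipschitz_on_cell: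
  assumes g: "dyadic_piecewise_affine m g" and bd: "\<forall>x\<in>{0..1}. \<bar>g x\<bar> \<le> r"
    and j: "j < 2^m" and st: "s \<in> dyadic_cell m j" "t \<in> dyadic_cell m j"
  shows "\<bar>g s - g t\<bar> \<le> 2 * r * 2^m * \<bar>s - t\<bar>"
proof -
  obtain c d where cd: "\<forall>x\<in>dyadic_cell m j. g x = c + d * x"
    using g j unfolding dyadic_piecewise_affine_def by blast
  define a b where "a = real j / 2^m" and "b = real (j + 1) / 2^m"
  have ab: "a \<in> dyadic_cell m j" "b \<in> dyadic_cell m j"
    unfolding a_def b_def dyadic_cell_def by (auto intro: divide_right_mono)
  then have "\<bar>g b - g a\<bar> \<le> 2 * r"
    using bd dyadic_cell_subset[OF j] by (smt (verit) subsetD)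
  moreover have "g b - g a = d / 2^m"
    using cd ab unfolding a_def b_def by (simp add: field_simps)
  ultimately have "\<bar>d\<bar> \<le> 2 * r * 2^m" by (simp add: abs_divide field_simps)
  moreover have "g s - g t = d * (s - t)" using cd st by (simp add: algebra_simps)
  ultimately show ?thesis by (simp add: abs_mult mult_right_mono)
qed

lemma dyadic_piecewise_affine_lipschitz:
  assumes g: "dyadic_piecewise_affine m g" and bd: "\<forall>x\<in>{0..1}. \<bar>g x\<bar> \<le> r"
    and st: "0 \<le> s" "s \<le> t" "t \<le> 1" "t - s \<le> 1 / 2^m"
  shows "\<bar>g s - g t\<bar> \<le> 2 * r * 2^m * (t - s)"
proof -
  obtain j where j: "j < 2^m" "s \<in> dyadic_cell m j"
    using dyadic_cell_exists[of s m] st by auto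
  define p where "p = real (j + 1) / 2^m"
  show ?thesis
  proof (cases "t \<le> p")
    case True
    then have "t \<in> dyadic_cell m j" using j(2) st(2) by (simp add: dyadic_cell_def p_def)
    with j have "\<bar>g s - g t\<bar> \<le> 2 * r * 2^m * \<bar>s - t\<bar>"
      by (intro dyadic_piecewise_affine_lipschitz_on_cell[OF g bd])
    then show ?thesis using st(2) by simp
  next
    case False
    \<comment> \<open>a step of length at most 2^-m crosses at most one node p\<close>
    have "real (j + 1) < t * 2^m" using False by (simp add: p_def field_simps)
    also have "\<dots> \<le> 2^m" using st(3) by simp
    finally have j1: "j + 1 < 2^m" by (metis of_nat_less_iff of_nat_numeral of_nat_power)
    have "t \<le> real (j + 1 + 1) / 2^m"
      using j(2) st(4) by (simp add: dyadic_cell_def add_divide_distrib)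
    then have "p \<in> dyadic_cell m (j + 1)" "t \<in> dyadic_cell m (j + 1)"
      using False by (auto simp: dyadic_cell_def p_def)
    then have "\<bar>g p - g t\<bar> \<le> 2 * r * 2^m * \<bar>p - t\<bar>"
      by (intro dyadic_piecewise_affine_lipschitz_on_cell[OF g bd j1])
    moreover have "p \<in> dyadic_cell m j" by (simp add: dyadic_cell_def p_def divide_right_mono)
    with j have "\<bar>g s - g p\<bar> \<le> 2 * r * 2^m * \<bar>s - p\<bar>"
      by (intro dyadic_piecewise_affine_lipschitz_on_cell[OF g bd])
    moreover have "s \<le> p" using j(2) by (simp add: dyadic_cell_def p_def)
    ultimately show ?thesis using False by (simp add: algebra_simps)
  qed
qed

lemma dyadic_piecewise_affine_holder:
  assumes g: "dyadic_piecewise_affine m g" and bd: "\<forall>x\<in>{0..1}. \<bar>g x\<bar> \<le> r"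
    and st: "0 \<le> s" "s < t" "t \<le> 1" and \<alpha>: "0 < \<alpha>" "\<alpha> \<le> 1"
  shows "\<bar>g s - g t\<bar> \<le> 2 * r * (2^m * (t - s)) powr \<alpha>"
proof -
  define x :: real where "x = 2^m * (t - s)"
  have x: "0 < x" using st by (simp add: x_def)
  have r: "0 \<le> r" using bd by (metis abs_ge_zero atLeastAtMost_iff order_trans zero_le_one order_refl)
  show ?thesis
  proof (cases "x \<le> 1")
    case True
    then have "t - s \<le> 1 / 2^m" by (simp add: x_def field_simps)
    then have "\<bar>g s - g t\<bar> \<le> 2 * r * x"
      using dyadic_piecewise_affine_lipschitz[OF g bd st(1) _ st(3)] st(2) by (simp add: x_def)
    also have "\<dots> \<le> 2 * r * x powr \<alpha>"
      using powr_mono'[OF \<alpha>(2), of x] x True r by (simp add: mult_left_mono)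
    finally show ?thesis by (simp add: x_def)
  next
    case False
    have "\<bar>g s - g t\<bar> \<le> 2 * r" using bd st by (smt (verit) atLeastAtMost_iff)
    also have "\<dots> \<le> 2 * r * x powr \<alpha>"
      using ge_one_powr_ge_zero[of x \<alpha>] False \<alpha> r by (simp add: mult_le_cancel_left1)
    finally show ?thesis by (simp add: x_def)
  qed
qed

lemma dyadic_interp_dist_le:
  assumes j: "j < 2^m" and t: "t \<in> dyadic_cell m j"
  shows "\<bar>dyadic_interp f m t - f t\<bar>
    \<le> \<bar>f (real j / 2^m) - f t\<bar> + \<bar>f (real (j + 1) / 2^m) - f t\<bar>"
proof -
  define a b where "a = f (real j / 2^m) - f t" and "b = f (real (j + 1) / 2^m) - f t"
  define \<theta> where "\<theta> = t * 2^m - real j"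
  have \<theta>: "0 \<le> \<theta>" "\<theta> \<le> 1" using t by (auto simp: \<theta>_def dyadic_cell_def field_simps)
  have "dyadic_interp f m t - f t = (1 - \<theta>) * a + \<theta> * b"
    using dyadic_interp_on_cell[OF j t] by (simp add: a_def b_def \<theta>_def algebra_simps)
  also have "\<bar>\<dots>\<bar> \<le> (1 - \<theta>) * \<bar>a\<bar> + \<theta> * \<bar>b\<bar>"
    using \<theta> by (intro order_trans[OF abs_triangle_ineq]) (simp add: abs_mult)
  also have "\<dots> \<le> \<bar>a\<bar> + \<bar>b\<bar>"
    using \<theta> by (intro add_mono mult_left_le_one_le) auto
  finally show ?thesis by (simp add: a_def b_def)
qed

lemma dyadic_interp_tendsto:
  assumes cf: "continuous_on {0..1} f" and t: "t \<in> {0..1}"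
  shows "(\<lambda>m. dyadic_interp f m t) \<longlonglongrightarrow> f t"
proof -
  obtain J where J: "\<And>m. J m < (2::nat)^m" "\<And>m. t \<in> dyadic_cell m (J m)"
    using dyadic_cell_exists[OF t] by metis
  define a b where "a m = real (J m) / 2^m" and "b m = real (J m + 1) / 2^m" for m
  have ab: "a m \<in> {0..1}" "b m \<in> {0..1}" "\<bar>a m - t\<bar> \<le> (1/2)^m" "\<bar>b m - t\<bar> \<le> (1/2)^m" for m
  proof -
    have "a m \<in> dyadic_cell m (J m)" "b m \<in> dyadic_cell m (J m)"
      by (auto simp: a_def b_def dyadic_cell_def divide_right_mono)
    then show "a m \<in> {0..1}" "b m \<in> {0..1}" using dyadic_cell_subset[OF J(1), of m] by (meson subsetD)+
    have "b m - a m = (1/2)^m" by (simp add: a_def b_def field_simps power_one_over)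
    then show "\<bar>a m - t\<bar> \<le> (1/2)^m" "\<bar>b m - t\<bar> \<le> (1/2)^m"
      using J(2)[of m] by (auto simp: a_def b_def dyadic_cell_def)
  qed
  have to_t: "(\<lambda>m. \<bar>f (x m) - f t\<bar>) \<longlonglongrightarrow> 0"
    if "\<And>m. x m \<in> {0..1}" "\<And>m. \<bar>x m - t\<bar> \<le> (1/2)^m" for x :: "nat \<Rightarrow> real"
  proof -
    have "(\<lambda>m. x m - t) \<longlonglongrightarrow> 0"
      using that(2) by (intro Lim_null_comparison[OF always_eventually LIMSEQ_realpow_zero]) auto
    then have "x \<longlonglongrightarrow> t" by (rule LIM_zero_cancel)
    then have "(\<lambda>m. f (x m)) \<longlonglongrightarrow> f t"
      using that(1) t by (intro continuous_on_tendsto_compose[OF cf] always_eventually) auto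
    then show ?thesis by (intro tendsto_rabs_zero LIM_zero)
  qed
  have "(\<lambda>m. \<bar>f (a m) - f t\<bar>) \<longlonglongrightarrow> 0" "(\<lambda>m. \<bar>f (b m) - f t\<bar>) \<longlonglongrightarrow> 0"
    using ab by (intro to_t; simp)+
  from tendsto_add[OF this] have lim0: "(\<lambda>m. \<bar>f (a m) - f t\<bar> + \<bar>f (b m) - f t\<bar>) \<longlonglongrightarrow> 0"
    by simp
  have "norm (dyadic_interp f m t - f t) \<le> \<bar>f (a m) - f t\<bar> + \<bar>f (b m) - f t\<bar>" for m
    using dyadic_interp_dist_le[OF J] by (simp add: a_def b_def)
  then have "(\<lambda>m. dyadic_interp f m t - f t) \<longlonglongrightarrow> 0"
    by (intro Lim_null_comparison[OF always_eventually lim0] allI)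
  then show ?thesis by (rule LIM_zero_cancel)
qed

lemma tail_bound_of_geometric_increments:
  fixes u :: "nat \<Rightarrow> real"
  assumes u: "u \<longlonglongrightarrow> L" and q: "0 < q" "q < 1"
    and inc: "\<And>i. n \<le> i \<Longrightarrow> \<bar>u (Suc i) - u i\<bar> \<le> C * q^Suc i"
  shows "\<bar>L - u n\<bar> \<le> C * q^Suc n / (1 - q)"
proof -
  have "0 \<le> C * q^Suc n" using inc[of n] by (meson abs_ge_zero order_trans order_refl)
  then have C: "0 \<le> C" using q by (meson mult_neg_pos not_le zero_less_power)
  have partial: "\<bar>u K - u n\<bar> \<le> C * (q^Suc n - q^Suc K) / (1 - q)" if "n \<le> K" for K
    using that
  proof (induction K rule: dec_induct)
    case (step K)
    have "\<bar>u (Suc K) - u n\<bar> \<le> \<bar>u K - u n\<bar> + \<bar>u (Suc K) - u K\<bar>" by linarith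
    also have "\<dots> \<le> C * (q^Suc n - q^Suc K) / (1 - q) + C * q^Suc K"
      using step.IH inc[OF step.hyps(1)] by linarith
    also have "\<dots> = C * (q^Suc n - q^Suc (Suc K)) / (1 - q)"
      using q by (simp add: field_simps)
    finally show ?case .
  qed simp
  have "\<bar>u K - u n\<bar> \<le> C * q^Suc n / (1 - q)" if "n \<le> K" for K
  proof -
    have "0 \<le> C * q^Suc K / (1 - q)" using C q by simp
    then show ?thesis using partial[OF that] by (simp add: diff_divide_distrib right_diff_distrib)
  qed
  moreover have "(\<lambda>K. \<bar>u K - u n\<bar>) \<longlonglongrightarrow> \<bar>L - u n\<bar>" by (intro tendsto_intros u)
  ultimately show ?thesis by (intro LIMSEQ_le_const2) auto
qed

lemma holder_norm01_le:
  assumes "\<And>s t. 0 \<le> s \<Longrightarrow> s < t \<Longrightarrow> t \<le> 1 \<Longrightarrow> \<bar>u s - u t\<bar> \<le> K * (t - s) powr \<alpha>"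
  shows "holder_norm01 \<alpha> u \<le> ereal K"
  unfolding holder_norm01_def
proof (rule SUP_least)
  fix p :: "real \<times> real" assume "p \<in> {(s, t). 0 \<le> s \<and> s < t \<and> t \<le> 1}"
  then obtain s t where p: "p = (s, t)" and st: "0 \<le> s" "s < t" "t \<le> 1" by auto
  then have "0 < (t - s) powr \<alpha>" by simp
  with assms[OF st] show "ereal (\<bar>u (fst p) - u (snd p)\<bar> / (snd p - fst p) powr \<alpha>) \<le> ereal K"
    by (simp add: p divide_le_eq)
qed

lemma holder_norm01_dyadic_remainder_le:
  fixes f :: "real \<Rightarrow> real"
  assumes cf: "continuous_on {0..1} f" and \<alpha>: "0 < \<alpha>" "\<alpha> \<le> 1" and c: "0 < c"
    and level: "\<And>i. n \<le> i \<Longrightarrow> \<forall>t\<in>{0..1}.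
      \<bar>dyadic_interp f (Suc i) t - dyadic_interp f i t\<bar> \<le> \<rho> * 2 powr (- (c + \<alpha>) * real (Suc i))"
  shows "holder_norm01 \<alpha> (\<lambda>t. f t - dyadic_interp f n t)
    \<le> ereal (2 * \<rho> * (2 powr - c) ^ Suc n / (1 - 2 powr - c))"
proof (rule holder_norm01_le)
  fix s t :: real assume st: "0 \<le> s" "s < t" "t \<le> 1"
  define q :: real where "q = 2 powr - c"
  have q: "0 < q" "q < 1" using c by (auto simp: q_def intro: powr_less_one)
  define u where "u m = dyadic_interp f m s - dyadic_interp f m t" for m
  have "u \<longlonglongrightarrow> f s - f t"
    unfolding u_def using st by (intro tendsto_diff dyadic_interp_tendsto[OF cf]) auto
  moreover have "\<bar>u (Suc i) - u i\<bar> \<le> (2 * \<rho> * (t - s) powr \<alpha>) * q ^ Suc i" if "n \<le> i" for i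
  proof -
    have "\<bar>u (Suc i) - u i\<bar>
        \<le> 2 * (\<rho> * 2 powr (- (c + \<alpha>) * real (Suc i))) * (2 ^ Suc i * (t - s)) powr \<alpha>"
      using dyadic_piecewise_affine_holder[OF dyadic_interp_Suc_diff_piecewise_affine
          level[OF that] st \<alpha>]
      by (simp add: u_def algebra_simps)
    also have "(2 ^ Suc i * (t - s)) powr \<alpha> = 2 powr (\<alpha> * real (Suc i)) * (t - s) powr \<alpha>"
    proof -
      have "(2 ^ Suc i * (t - s)) powr \<alpha> = (2 ^ Suc i) powr \<alpha> * (t - s) powr \<alpha>"
        by (rule powr_mult)
      moreover have "(2::real) ^ Suc i = 2 powr real (Suc i)" by (rule powr_realpow[symmetric]) simp
      ultimately show ?thesis by (simp only: powr_powr mult.commute)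
    qed
    also have "2 powr (- (c + \<alpha>) * real (Suc i)) * 2 powr (\<alpha> * real (Suc i)) = q ^ Suc i"
      by (simp add: q_def powr_realpow[symmetric] powr_powr powr_add[symmetric] algebra_simps)
    ultimately show ?thesis by (simp add: ac_simps)
  qed
  ultimately have "\<bar>(f s - f t) - u n\<bar> \<le> (2 * \<rho> * (t - s) powr \<alpha>) * q ^ Suc n / (1 - q)"
    by (rule tail_bound_of_geometric_increments[OF _ q])
  then show "\<bar>(f s - dyadic_interp f n s) - (f t - dyadic_interp f n t)\<bar>
    \<le> 2 * \<rho> * (2 powr - c) ^ Suc n / (1 - 2 powr - c) * (t - s) powr \<alpha>"
    by (simp add: u_def q_def algebra_simps)
qed

lemma abs_le_of_sup_norm01_less:
  assumes "sup_norm01 u < ereal x" "t \<in> {0..1}"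
  shows "\<bar>u t\<bar> \<le> x"
proof -
  have "ereal \<bar>u t\<bar> \<le> sup_norm01 u" unfolding sup_norm01_def using assms(2) by (rule SUP_upper)
  also note assms(1)
  finally show ?thesis by simp
qed

lemma not_mem_of_Sup_enat_less:
  assumes "Sup (enat ` S) < enat n" "n \<le> k"
  shows "k \<notin> S"
proof
  assume "k \<in> S"
  then have "enat k \<le> Sup (enat ` S)" by (intro Sup_upper) simp
  also note assms(1)
  finally show False using assms(2) by simp
qed

lemma dyadic_increment_le_of_Sup_less:
  assumes "Sup (enat ` {n. n \<ge> 1 \<and>
      sup_norm01 (\<lambda>t. dyadic_interp f n t - dyadic_interp f (n - 1) t) \<ge> ereal (r n)}) < enat n"
    and "n \<le> i" "t \<in> {0..1}"
  shows "\<bar>dyadic_interp f (Suc i) t - dyadic_interp f i t\<bar> \<le> r (Suc i)"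
proof -
  have "\<not> ereal (r (Suc i)) \<le> sup_norm01 (\<lambda>t. dyadic_interp f (Suc i) t - dyadic_interp f i t)"
    using not_mem_of_Sup_enat_less[OF assms(1), of "Suc i"] assms(2) by auto
  then show ?thesis using abs_le_of_sup_norm01_less[OF _ assms(3)] by (simp add: not_le)
qed

theorem theorem4:
  fixes M :: "'a measure" and B :: "'a \<Rightarrow> real \<Rightarrow> real"
    and H \<alpha> \<delta> \<rho> :: real and N :: "'a \<Rightarrow> enat"
  assumes H: "1/2 < H" "H < 1"
    and fbm: "is_fbm M H B"
    and \<alpha>: "1/2 < \<alpha>" "\<alpha> < H"
    and \<delta>: "0 < \<delta>" "\<delta> < H - \<alpha>"
    and \<rho>: "0 < \<rho>"
    and N_def: "\<And>\<omega>. N \<omega> = Sup (enat ` {n. n \<ge> 1 \<and>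
        sup_norm01 (\<lambda>t. dyadic_interp (B \<omega>) n t - dyadic_interp (B \<omega>) (n - 1) t)
          \<ge> ereal (\<rho> * 2 powr (- (H - \<delta>) * real n))})"
  shows "\<forall>\<omega>\<in>space M. \<forall>n::nat. enat n > N \<omega> \<longrightarrow>
     holder_norm01 \<alpha> (\<lambda>t. B \<omega> t - dyadic_interp (B \<omega>) n t)
       \<le> ereal (\<rho> * 2 powr (2 - \<alpha>) * 2 powr (- (H - \<alpha> - \<delta>) * real (n + 1))
                 / (1 - 2 powr (- (H - \<alpha> - \<delta>))))"
proof (intro ballI allI impI)
  fix \<omega> n assume \<omega>: "\<omega> \<in> space M" and nN: "N \<omega> < enat n"
  define c where "c = H - \<alpha> - \<delta>"
  have c: "0 < c" and H_minus_\<delta>: "H - \<delta> = c + \<alpha>" using \<delta> by (simp_all add: c_def)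
  have cf: "continuous_on {0..1} (B \<omega>)" using fbm \<omega> unfolding is_fbm_def by auto
  have level: "\<forall>t\<in>{0..1}. \<bar>dyadic_interp (B \<omega>) (Suc i) t - dyadic_interp (B \<omega>) i t\<bar>
      \<le> \<rho> * 2 powr (- (c + \<alpha>) * real (Suc i))" if "n \<le> i" for i
    using dyadic_increment_le_of_Sup_less[where r = "\<lambda>n. \<rho> * 2 powr (- (H - \<delta>) * real n)",
        OF nN[unfolded N_def] that]
    by (simp add: H_minus_\<delta>)
  have q: "0 < 2 powr - c" "2 powr - c < 1" using c by (auto intro: powr_less_one)
  have two: "2 powr 1 \<le> 2 powr (2 - \<alpha>)" using \<alpha> H by (intro powr_mono) auto
  have "holder_norm01 \<alpha> (\<lambda>t. B \<omega> t - dyadic_interp (B \<omega>) n t)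
      \<le> ereal (2 * \<rho> * (2 powr - c) ^ Suc n / (1 - 2 powr - c))"
    using \<alpha> H by (intro holder_norm01_dyadic_remainder_le[OF cf _ _ c level]) auto
  also have "(2 powr - c) ^ Suc n = 2 powr (- c * real (n + 1))"
    by (simp add: powr_realpow[symmetric] powr_powr powr_add[symmetric] algebra_simps)
  also have "2 * \<rho> * 2 powr (- c * real (n + 1)) / (1 - 2 powr - c)
      \<le> \<rho> * 2 powr (2 - \<alpha>) * 2 powr (- c * real (n + 1)) / (1 - 2 powr - c)"
    using q two \<rho> by (intro divide_right_mono mult_right_mono) auto
  finally show "holder_norm01 \<alpha> (\<lambda>t. B \<omega> t - dyadic_interp (B \<omega>) n t)
      \<le> ereal (\<rho> * 2 powr (2 - \<alpha>) * 2 powr (- (H - \<alpha> - \<delta>) * real (n + 1))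
                 / (1 - 2 powr (- (H - \<alpha> - \<delta>))))"
    by (simp only: c_def) simp
qed

end
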